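(* Fix odd positive integers $k$ and $d$. For every $\delta\in(0,1)$ there exists $\gamma>0$ such that if $r_n\ge\gamma\sqrt{\log n/n}$, then for all $n$ large enough, $$\inf_Q\mathbb{P}(Q\text{ is }\delta\text{-good})\ge 1-2(mkd)^2 n^{-\gamma^2\delta^2/(24d^2)},$$ where the infimum is over all cells $Q$. In particular, if $\gamma^2>24d^2/\delta^2$, then $$\lim_{n\to\infty}\mathbb{P}(\text{every cell }Q\text{ is }\delta\text{-good})=1.$$
   Context: $[0,1]^2$ is viewed as a torus and $\mathbf X=\{X_1,\dots,X_n\}$ are independent uniform points in $[0,1]^2$; $r_n>0$. For odd positive integers $k,d$ set $m=\lceil 2/(kr_n)\rceil$ and $r_n'=2/(km)$. The torus is partitioned into $m^2$ congruent axis-parallel squares of side $1/m$, called cells, and each cell is partitioned into $k^2d^2$ congruent squares of side $1/(mkd)=r_n'/(2d)$, called boxes. For $\delta\in(0,1)$, a cell $Q$ is $\delta$-good if every box $S$ contained in $Q$ satisfies $\frac{(1-\delta)nr_n^2}{4d^2}\le|\mathbf X\cap S|\le\frac{(1+\delta)nr_n^2}{4d^2}$. *)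

theory Defs
  imports "HOL-Probability.Probability"
begin

definition unif_sq :: "(real \<times> real) measure" where
  "unif_sq = uniform_measure lborel ({0..<1} \<times> {0..<1})"

definition sample_space :: "nat \<Rightarrow> (nat \<Rightarrow> real \<times> real) measure" where
  "sample_space n = PiM {..<n} (\<lambda>_. unif_sq)"

definition ncells :: "nat \<Rightarrow> real \<Rightarrow> nat" where
  "ncells k r = nat \<lceil>2 / (real k * r)\<rceil>"

definition grid_sq :: "nat \<Rightarrow> nat \<times> nat \<Rightarrow> (real \<times> real) set" where
  "grid_sq N ij = {real (fst ij) / real N ..< (real (fst ij) + 1) / real N}
                 \<times> {real (snd ij) / real N ..< (real (snd ij) + 1) / real N}"

definition cells :: "nat \<Rightarrow> real \<Rightarrow> (real \<times> real) set set" where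
  "cells k r = grid_sq (ncells k r) ` ({..<ncells k r} \<times> {..<ncells k r})"

definition boxes :: "nat \<Rightarrow> nat \<Rightarrow> real \<Rightarrow> (real \<times> real) set set" where
  "boxes k d r = (let N = ncells k r * k * d in grid_sq N ` ({..<N} \<times> {..<N}))"

definition npts :: "nat \<Rightarrow> (nat \<Rightarrow> real \<times> real) \<Rightarrow> (real \<times> real) set \<Rightarrow> nat" where
  "npts n X S = card {i. i < n \<and> X i \<in> S}"

definition delta_good ::
  "nat \<Rightarrow> nat \<Rightarrow> real \<Rightarrow> nat \<Rightarrow> real \<Rightarrow> (nat \<Rightarrow> real \<times> real) \<Rightarrow> (real \<times> real) set \<Rightarrow> bool" where
  "delta_good k d \<delta> n r X Q \<longleftrightarrow>
     (\<forall>S\<in>boxes k d r. S \<subseteq> Q \<longrightarrow>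
        (1 - \<delta>) * real n * r\<^sup>2 / (4 * real d ^ 2) \<le> real (npts n X S) \<and>
        real (npts n X S) \<le> (1 + \<delta>) * real n * r\<^sup>2 / (4 * real d ^ 2))"

end

(* A box has probability mass 1/(mkd)^2, and since m = ceiling (2/(kr)), the mean number of points
   in a box, n/(mkd)^2, lies between (1 - delta/10) n r^2/(4d^2) and n r^2/(4d^2) as soon as
   kr <= delta/20. Chernoff bounds for this binomial count make a box violate the goodness bounds
   with probability at most 2 exp(-delta^2 n r^2/(20 d^2)) <= 2 n^(-gamma^2 delta^2/(24 d^2)) when
   r >= gamma sqrt(log n / n), and a union bound over the (mkd)^2 boxes gives the first claim.
   Since (mkd)^2 = O(n / log n), the probability that some cell fails is
   O(n^(1 - gamma^2 delta^2/(24 d^2))), which tends to 0 when gamma^2 > 24 d^2/delta^2. *)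

theory Submission
  imports Defs
begin

lemma npts_eq_sum_indicator: "real (npts n X S) = (\<Sum>i<n. indicator S (X i))"
proof -
  have "{i. i < n \<and> X i \<in> S} = {..<n} \<inter> {i. X i \<in> S}" by auto
  then show ?thesis unfolding npts_def by (simp add: indicator_def sum.If_cases)
qed

lemma bernoulli_mgf_power_le_exp:
  fixes p t :: real
  assumes "0 \<le> p" "p \<le> 1"
  shows "(1 - p + p * exp t) ^ n \<le> exp (real n * p * (exp t - 1))"
proof -
  have "1 - p + p * exp t \<le> exp (p * (exp t - 1))"
    using exp_ge_add_one_self[of "p * (exp t - 1)"] by (simp add: algebra_simps)
  then have "(1 - p + p * exp t) ^ n \<le> exp (p * (exp t - 1)) ^ n"
    using assms by (intro power_mono) auto
  then show ?thesis by (simp add: exp_of_nat_mult[symmetric] mult.assoc)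
qed

context
  fixes M :: "(real \<times> real) measure" and S :: "(real \<times> real) set"
  assumes M: "prob_space M" and S: "S \<in> sets M"
begin

interpretation prob_space M by (fact M)

abbreviation samples :: "nat \<Rightarrow> (nat \<Rightarrow> real \<times> real) measure"
  where "samples n \<equiv> PiM {..<n} (\<lambda>_. M)"

lemma nn_integral_exp_indicator:
  "(\<integral>\<^sup>+x. ennreal (exp (t * indicator S x)) \<partial>M)
     = ennreal (1 - measure M S + measure M S * exp t)"
proof -
  have "(\<integral>\<^sup>+x. ennreal (exp (t * indicator S x)) \<partial>M)
      = (\<integral>\<^sup>+x. ennreal (exp t) * indicator S x + indicator (space M - S) x \<partial>M)"
    by (intro nn_integral_cong) (auto simp: indicator_def)
  also have "\<dots> = ennreal (exp t) * emeasure M S + emeasure M (space M - S)"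
    using S by (simp add: nn_integral_add nn_integral_cmult_indicator)
  also have "\<dots> = ennreal (exp t * measure M S + (1 - measure M S))"
    using S by (simp add: emeasure_eq_measure prob_compl ennreal_mult ennreal_plus)
  finally show ?thesis by (simp add: algebra_simps)
qed

lemma nn_integral_exp_npts:
  "(\<integral>\<^sup>+X. ennreal (exp (t * real (npts n X S))) \<partial>samples n)
     = ennreal ((1 - measure M S + measure M S * exp t) ^ n)"
proof -
  interpret product_sigma_finite "\<lambda>_::nat. M"
    by (simp add: product_sigma_finite_def prob_space_imp_sigma_finite M)
  have "exp (t * real (npts n X S)) = (\<Prod>i<n. exp (t * indicator S (X i)))" for X
    unfolding npts_eq_sum_indicator sum_distrib_left by (rule exp_sum) simp
  then have "(\<integral>\<^sup>+X. ennreal (exp (t * real (npts n X S))) \<partial>samples n)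
      = (\<integral>\<^sup>+X. (\<Prod>i<n. ennreal (exp (t * indicator S (X i)))) \<partial>samples n)"
    by (simp add: prod_ennreal)
  also have "\<dots> = (\<Prod>i<n. \<integral>\<^sup>+x. ennreal (exp (t * indicator S x)) \<partial>M)"
    using S by (intro product_nn_integral_prod) auto
  also have "\<dots> = ennreal ((1 - measure M S + measure M S * exp t) ^ n)"
    using prob_le_1[of S] by (simp add: nn_integral_exp_indicator ennreal_power del: ennreal_plus)
  finally show ?thesis .
qed

lemma borel_measurable_npts [measurable]:
  "(\<lambda>X. real (npts n X S)) \<in> borel_measurable (samples n)"
  unfolding npts_eq_sum_indicator using S by measurable

lemma prob_npts_Chernoff:
  "measure (samples n) {X \<in> space (samples n). t * a \<le> t * real (npts n X S)}
     \<le> exp (- t * a) * (1 - measure M S + measure M S * exp t) ^ n"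
proof -
  interpret P: prob_space "samples n" by (intro prob_space_PiM M)
  have mgf_nonneg: "0 \<le> 1 - measure M S + measure M S * exp t"
    using prob_le_1[of S] by simp
  let ?u = "\<lambda>X. ennreal (exp (t * real (npts n X S)))"
  have "{X \<in> space (samples n). t * a \<le> t * real (npts n X S)}
      = {X \<in> space (samples n). 1 \<le> ennreal (exp (- t * a)) * ?u X}"
    by (auto simp: ennreal_mult[symmetric] exp_add[symmetric] algebra_simps)
  also have "emeasure (samples n) \<dots> \<le> ennreal (exp (- t * a)) * (\<integral>\<^sup>+X. ?u X * indicator (space (samples n)) X \<partial>samples n)"
    by (intro nn_integral_Markov_inequality) measurable
  also have "(\<integral>\<^sup>+X. ?u X * indicator (space (samples n)) X \<partial>samples n) = (\<integral>\<^sup>+X. ?u X \<partial>samples n)"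
    by (intro nn_integral_cong) simp
  also have "\<dots> = ennreal ((1 - measure M S + measure M S * exp t) ^ n)"
    by (rule nn_integral_exp_npts)
  also have "ennreal (exp (- t * a)) * \<dots> = ennreal (exp (- t * a) * (1 - measure M S + measure M S * exp t) ^ n)"
    using mgf_nonneg by (simp add: ennreal_mult)
  finally show ?thesis
    using mgf_nonneg by (simp add: P.emeasure_eq_measure)
qed

lemma prob_npts_upper_tail:
  assumes "0 \<le> \<delta>" "\<delta> \<le> 2" "0 \<le> T" and mean: "real n * measure M S \<le> T"
  shows "measure (samples n) {X \<in> space (samples n). (1 + \<delta>) * T < real (npts n X S)}
     \<le> exp (- (\<delta>\<^sup>2 * T / 4))"
proof -
  interpret P: prob_space "samples n" by (intro prob_space_PiM M)
  define p t where "p = measure M S" and "t = \<delta> / 2"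
  have p: "0 \<le> p" "p \<le> 1" and t: "0 \<le> t" "t \<le> 1"
    using assms by (auto simp: p_def t_def)
  have "measure (samples n) {X \<in> space (samples n). (1 + \<delta>) * T < real (npts n X S)}
      \<le> measure (samples n) {X \<in> space (samples n). t * ((1 + \<delta>) * T) \<le> t * real (npts n X S)}"
    using t by (intro P.finite_measure_mono) (auto intro: mult_left_mono)
  also have "\<dots> \<le> exp (- t * ((1 + \<delta>) * T)) * (1 - p + p * exp t) ^ n"
    unfolding p_def by (rule prob_npts_Chernoff)
  also have "\<dots> \<le> exp (- t * ((1 + \<delta>) * T)) * exp (real n * p * (exp t - 1))"
    using p by (intro mult_left_mono bernoulli_mgf_power_le_exp) auto
  also have "\<dots> \<le> exp (- t * ((1 + \<delta>) * T)) * exp (T * (t + t\<^sup>2))"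
  proof -
    have "real n * p * (exp t - 1) \<le> T * (exp t - 1)"
      using mean t unfolding p_def by (intro mult_right_mono) auto
    also have "\<dots> \<le> T * (t + t\<^sup>2)"
      using exp_bound[of t] t \<open>0 \<le> T\<close> by (intro mult_left_mono) (auto simp: power2_eq_square)
    finally show ?thesis by simp
  qed
  also have "\<dots> = exp (- (\<delta>\<^sup>2 * T / 4))"
    unfolding t_def by (simp add: exp_add[symmetric] power2_eq_square field_simps)
  finally show ?thesis .
qed

lemma prob_npts_lower_tail:
  assumes "0 \<le> \<delta>" "0 \<le> T" and mean: "(1 - \<delta> / 10) * T \<le> real n * measure M S"
  shows "measure (samples n) {X \<in> space (samples n). real (npts n X S) < (1 - \<delta>) * T}
     \<le> exp (- (\<delta>\<^sup>2 * T / 5))"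
proof -
  interpret P: prob_space "samples n" by (intro prob_space_PiM M)
  define p s where "p = measure M S" and "s = \<delta> / 2"
  have p: "0 \<le> p" "p \<le> 1" and s: "0 \<le> s"
    using assms by (auto simp: p_def s_def)
  have "measure (samples n) {X \<in> space (samples n). real (npts n X S) < (1 - \<delta>) * T}
      \<le> measure (samples n) {X \<in> space (samples n). - s * ((1 - \<delta>) * T) \<le> - s * real (npts n X S)}"
    using s by (intro P.finite_measure_mono) (auto intro: mult_left_mono)
  also have "\<dots> \<le> exp (s * ((1 - \<delta>) * T)) * (1 - p + p * exp (- s)) ^ n"
    unfolding p_def using prob_npts_Chernoff[where t = "- s"] by simp
  also have "\<dots> \<le> exp (s * ((1 - \<delta>) * T)) * exp (real n * p * (exp (- s) - 1))"
    using p by (intro mult_left_mono bernoulli_mgf_power_le_exp) auto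
  also have "\<dots> \<le> exp (s * ((1 - \<delta>) * T)) * exp (- ((1 - \<delta> / 10) * T * (s / (1 + s))))"
  proof -
    have "exp (- s) \<le> 1 / (1 + s)"
      using exp_ge_add_one_self[of s] s by (simp add: exp_minus field_simps)
    then have "exp (- s) - 1 \<le> - (s / (1 + s))"
      using s by (simp add: field_simps)
    then have "real n * p * (exp (- s) - 1) \<le> real n * p * (- (s / (1 + s)))"
      using p by (intro mult_left_mono) auto
    also have "\<dots> \<le> (1 - \<delta> / 10) * T * (- (s / (1 + s)))"
      using mean s unfolding p_def by (intro mult_right_mono_neg) auto
    finally show ?thesis by simp
  qed
  also have "\<dots> = exp (- (\<delta>\<^sup>2 * T / 5) - 3 * \<delta> ^ 3 * T / (10 * (2 + \<delta>)))"
    unfolding s_def using \<open>0 \<le> \<delta>\<close> by (simp add: exp_add[symmetric] field_simps power2_eq_square power3_eq_cube)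
  also have "\<dots> \<le> exp (- (\<delta>\<^sup>2 * T / 5))"
    using assms by simp
  finally show ?thesis .
qed

lemma prob_npts_deviation:
  assumes "0 \<le> \<delta>" "\<delta> \<le> 2" "0 \<le> T"
    and "(1 - \<delta> / 10) * T \<le> real n * measure M S" "real n * measure M S \<le> T"
  shows "measure (samples n)
      {X \<in> space (samples n). \<not> ((1 - \<delta>) * T \<le> real (npts n X S) \<and> real (npts n X S) \<le> (1 + \<delta>) * T)}
    \<le> 2 * exp (- (\<delta>\<^sup>2 * T / 5))"
proof -
  interpret P: prob_space "samples n" by (intro prob_space_PiM M)
  let ?L = "{X \<in> space (samples n). real (npts n X S) < (1 - \<delta>) * T}"
  let ?U = "{X \<in> space (samples n). (1 + \<delta>) * T < real (npts n X S)}"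
  have "measure (samples n) {X \<in> space (samples n). \<not> ((1 - \<delta>) * T \<le> real (npts n X S) \<and> real (npts n X S) \<le> (1 + \<delta>) * T)}
      = measure (samples n) (?L \<union> ?U)"
    by (intro arg_cong[where f = "measure (samples n)"]) auto
  also have "\<dots> \<le> measure (samples n) ?L + measure (samples n) ?U"
  proof (rule measure_subadditive)
    show "?L \<in> sets (samples n)" "?U \<in> sets (samples n)" by measurable
  qed simp_all
  also have "\<dots> \<le> exp (- (\<delta>\<^sup>2 * T / 5)) + exp (- (\<delta>\<^sup>2 * T / 4))"
    using assms by (intro add_mono prob_npts_lower_tail prob_npts_upper_tail)
  also have "exp (- (\<delta>\<^sup>2 * T / 4)) \<le> exp (- (\<delta>\<^sup>2 * T / 5))"
    using \<open>0 \<le> T\<close> by (simp add: frac_le)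
  finally show ?thesis by simp
qed

end

lemma emeasure_lborel_Times_atLeastLessThan:
  fixes a b c d :: real
  assumes "a \<le> b" "c \<le> d"
  shows "emeasure lborel ({a..<b} \<times> {c..<d}) = ennreal ((b - a) * (d - c))"
proof -
  have "emeasure (lborel \<Otimes>\<^sub>M lborel) ({a..<b} \<times> {c..<d}) = emeasure lborel {a..<b} * emeasure lborel {c..<d}"
    by (rule lborel.emeasure_pair_measure_Times) auto
  then show ?thesis using assms by (simp add: lborel_prod ennreal_mult)
qed

lemma prob_space_unif_sq: "prob_space unif_sq"
  unfolding unif_sq_def
  by (rule prob_space_uniform_measure) (simp_all add: emeasure_lborel_Times_atLeastLessThan)

lemma sets_unif_sq [simp]: "sets unif_sq = sets borel"
  unfolding unif_sq_def by simp

lemma prob_space_sample_space: "prob_space (sample_space n)"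
  unfolding sample_space_def by (intro prob_space_PiM prob_space_unif_sq)

lemma grid_sq_subset_unit_sq:
  assumes "i < N" "j < N"
  shows "grid_sq N (i, j) \<subseteq> {0..<1} \<times> {0..<1}"
proof -
  have "{real l / N ..< (real l + 1) / N} \<subseteq> {0..<1}" if "l < N" for l
  proof -
    have "(real l + 1) / N \<le> 1" using that by (simp add: field_simps)
    then show ?thesis by (auto intro: order.trans[OF divide_nonneg_nonneg])
  qed
  then show ?thesis
    using assms unfolding grid_sq_def by (simp add: subset_iff)
qed

lemma measure_unif_sq_grid_sq:
  assumes "i < N" "j < N"
  shows "measure unif_sq (grid_sq N (i, j)) = 1 / real N ^ 2"
proof -
  have "emeasure unif_sq (grid_sq N (i, j)) = emeasure lborel (grid_sq N (i, j))"
    unfolding unif_sq_def using grid_sq_subset_unit_sq[OF assms]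
    by (subst emeasure_uniform_measure)
       (auto simp: grid_sq_def emeasure_lborel_Times_atLeastLessThan Int_absorb1 divide_ennreal_def intro!: borel_Times)
  also have "\<dots> = ennreal (1 / real N ^ 2)"
    using assms unfolding grid_sq_def
    by (subst emeasure_lborel_Times_atLeastLessThan) (auto simp: field_simps power2_eq_square)
  finally show ?thesis by (simp add: measure_def)
qed

lemma sets_boxes: "S \<in> boxes k d r \<Longrightarrow> S \<in> sets borel"
  unfolding boxes_def Let_def grid_sq_def by (auto intro!: borel_Times)

lemma finite_boxes: "finite (boxes k d r)"
  unfolding boxes_def Let_def by simp

lemma card_boxes_le: "card (boxes k d r) \<le> (ncells k r * k * d)\<^sup>2"
  unfolding boxes_def Let_def
  by (rule order.trans[OF card_image_le]) (simp_all add: card_cartesian_product power2_eq_square)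

lemma measure_unif_sq_box:
  "S \<in> boxes k d r \<Longrightarrow> measure unif_sq S = 1 / real (ncells k r * k * d) ^ 2"
  unfolding boxes_def Let_def by (auto simp: measure_unif_sq_grid_sq simp del: of_nat_mult)

lemma borel_measurable_npts_sample_space [measurable]:
  "S \<in> sets borel \<Longrightarrow> (\<lambda>X. real (npts n X S)) \<in> borel_measurable (sample_space n)"
  unfolding sample_space_def by (rule borel_measurable_npts[OF prob_space_unif_sq]) simp

lemma delta_good_antimono:
  "delta_good k d \<delta> n r X Q \<Longrightarrow> Q' \<subseteq> Q \<Longrightarrow> delta_good k d \<delta> n r X Q'"
  unfolding delta_good_def by blast

lemma sets_delta_good:
  "{X \<in> space (sample_space n). delta_good k d \<delta> n r X Q} \<in> sets (sample_space n)"
  unfolding delta_good_def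
proof (rule sets.sets_Collect_finite_All[OF _ finite_boxes])
  fix S assume "S \<in> boxes k d r"
  then have [measurable]: "S \<in> sets borel" by (rule sets_boxes)
  show "{X \<in> space (sample_space n). S \<subseteq> Q \<longrightarrow>
        (1 - \<delta>) * real n * r\<^sup>2 / (4 * real d ^ 2) \<le> real (npts n X S) \<and>
        real (npts n X S) \<le> (1 + \<delta>) * real n * r\<^sup>2 / (4 * real d ^ 2)} \<in> sets (sample_space n)"
    by measurable
qed

lemma sets_delta_good_cells:
  "{X \<in> space (sample_space n). \<forall>Q\<in>cells k r. delta_good k d \<delta> n r X Q} \<in> sets (sample_space n)"
  unfolding cells_def by (intro sets.sets_Collect_finite_All sets_delta_good) simp

text \<open>With \<open>Q = UNIV\<close> the event says that every box is balanced; by \<open>delta_good_antimono\<close>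
  it is contained in the event that any given cell, or all cells at once, are \<open>\<delta>\<close>-good.\<close>

lemma prob_delta_good_UNIV:
  fixes k d n :: nat and r \<delta> :: real
  defines "N \<equiv> ncells k r * k * d" and "T \<equiv> real n * r\<^sup>2 / (4 * real d ^ 2)"
  assumes "0 \<le> \<delta>" "\<delta> \<le> 2"
    and "(1 - \<delta> / 10) * T \<le> real n / real N ^ 2" "real n / real N ^ 2 \<le> T"
  shows "1 - 2 * real N ^ 2 * exp (- (\<delta>\<^sup>2 * T / 5))
    \<le> measure (sample_space n) {X \<in> space (sample_space n). delta_good k d \<delta> n r X UNIV}"
proof -
  interpret P: prob_space "sample_space n" by (rule prob_space_sample_space)
  define bad where "bad S = {X \<in> space (sample_space n).
    \<not> ((1 - \<delta>) * T \<le> real (npts n X S) \<and> real (npts n X S) \<le> (1 + \<delta>) * T)}" for S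
  have bad_sets: "bad S \<in> sets (sample_space n)" if "S \<in> boxes k d r" for S
    using sets_boxes[OF that] unfolding bad_def by measurable
  have prob_bad: "P.prob (bad S) \<le> 2 * exp (- (\<delta>\<^sup>2 * T / 5))" if "S \<in> boxes k d r" for S
    using prob_npts_deviation[OF prob_space_unif_sq, of S \<delta> T n] sets_boxes[OF that] assms
      measure_unif_sq_box[OF that]
    by (simp add: bad_def sample_space_def T_def N_def)
  have "P.prob (\<Union>S\<in>boxes k d r. bad S) \<le> (\<Sum>S\<in>boxes k d r. P.prob (bad S))"
    using bad_sets by (intro P.finite_measure_subadditive_finite finite_boxes) auto
  also have "\<dots> \<le> real (card (boxes k d r)) * (2 * exp (- (\<delta>\<^sup>2 * T / 5)))"
    using sum_bounded_above[of "boxes k d r" "\<lambda>S. P.prob (bad S)"] prob_bad by simp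
  also have "\<dots> \<le> real N ^ 2 * (2 * exp (- (\<delta>\<^sup>2 * T / 5)))"
    using card_boxes_le[of k d r] unfolding N_def
    by (intro mult_right_mono) (simp_all add: of_nat_le_iff[symmetric, where 'a = real])
  finally have "1 - 2 * real N ^ 2 * exp (- (\<delta>\<^sup>2 * T / 5)) \<le> P.prob (space (sample_space n) - (\<Union>S\<in>boxes k d r. bad S))"
    using bad_sets finite_boxes by (subst P.prob_compl) auto
  also have "space (sample_space n) - (\<Union>S\<in>boxes k d r. bad S)
      = {X \<in> space (sample_space n). delta_good k d \<delta> n r X UNIV}"
    unfolding bad_def delta_good_def T_def by auto
  finally show ?thesis .
qed

lemma ncells_mult_bounds:
  assumes "0 < k" "0 < r"
  shows "2 \<le> real (ncells k r) * real k * r" "real (ncells k r) * real k * r \<le> 2 + real k * r"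
proof -
  have pos: "0 < 2 / (real k * r)" using assms by simp
  have "2 / (real k * r) \<le> real (ncells k r)" "real (ncells k r) \<le> 2 / (real k * r) + 1"
    unfolding ncells_def using pos by (simp_all add: of_nat_nat le_of_int_ceiling)
  then show "2 \<le> real (ncells k r) * real k * r" "real (ncells k r) * real k * r \<le> 2 + real k * r"
    using assms by (simp_all add: field_simps)
qed

lemma box_mean_bounds:
  fixes k d n :: nat and r \<delta> :: real
  defines "N \<equiv> ncells k r * k * d" and "T \<equiv> real n * r\<^sup>2 / (4 * real d ^ 2)"
  assumes "0 < k" "0 < d" "0 < r" "0 \<le> \<delta>" "\<delta> \<le> 1" "real k * r \<le> \<delta> / 20"
  shows "(1 - \<delta> / 10) * T \<le> real n / real N ^ 2" "real n / real N ^ 2 \<le> T"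
proof -
  define q where "q = (real N * r)\<^sup>2 / (4 * real d ^ 2)"
  have N_r: "real N * r = (real (ncells k r) * real k * r) * real d"
    unfolding N_def by simp
  have "2 * real d \<le> real N * r" "real N * r \<le> (2 + \<delta> / 20) * real d"
    using ncells_mult_bounds[OF assms(3,5)] assms unfolding N_r by (auto intro: mult_right_mono)
  then have lower: "4 * real d ^ 2 \<le> (real N * r)\<^sup>2"
    and upper: "(real N * r)\<^sup>2 \<le> (2 + \<delta> / 20)\<^sup>2 * real d ^ 2"
    using assms power_mono[of "2 * real d" "real N * r" 2] power_mono[of "real N * r" "(2 + \<delta> / 20) * real d" 2]
    by (simp_all add: power_mult_distrib)
  have "(1 - \<delta> / 10) * (real N * r)\<^sup>2 \<le> ((1 - \<delta> / 10) * (2 + \<delta> / 20)\<^sup>2) * real d ^ 2"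
    using upper assms by (simp add: mult_left_mono mult.assoc)
  also have "\<dots> \<le> 4 * real d ^ 2"
    using assms by (intro mult_right_mono) (simp_all add: power2_eq_square algebra_simps)
  finally have "(1 - \<delta> / 10) * (real N * r)\<^sup>2 \<le> 4 * real d ^ 2" .
  with lower have "1 \<le> q" "(1 - \<delta> / 10) * q \<le> 1"
    using assms unfolding q_def by (simp_all add: le_divide_eq divide_le_eq)
  moreover have "T = q * (real n / real N ^ 2)"
    using assms ncells_mult_bounds[OF assms(3,5)]
    unfolding q_def T_def N_r by (auto simp: field_simps power_mult_distrib)
  ultimately show "(1 - \<delta> / 10) * T \<le> real n / real N ^ 2" "real n / real N ^ 2 \<le> T"
    using mult_right_mono[of "(1 - \<delta> / 10) * q" 1 "real n / real N ^ 2"]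
      mult_right_mono[of 1 q "real n / real N ^ 2"]
    by (simp_all add: mult.assoc)
qed

lemma sq_radius_lower_bound:
  fixes \<gamma> r :: real
  assumes "1 \<le> n" "0 \<le> \<gamma>" "\<gamma> * sqrt (ln (real n) / real n) \<le> r"
  shows "\<gamma>\<^sup>2 * ln (real n) \<le> real n * r\<^sup>2"
proof -
  have nonneg: "0 \<le> ln (real n) / real n" using assms by simp
  then have "\<gamma>\<^sup>2 * (ln (real n) / real n) \<le> r\<^sup>2"
    using assms power_mono[OF assms(3), of 2] by (simp add: power_mult_distrib)
  then show ?thesis
    using assms by (simp add: field_simps)
qed

lemma exp_deviation_le_powr:
  fixes \<gamma> \<delta> r :: real
  assumes "1 \<le> n" "0 < d" "0 \<le> \<gamma>" "\<gamma> * sqrt (ln (real n) / real n) \<le> r"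
  shows "exp (- (\<delta>\<^sup>2 * (real n * r\<^sup>2 / (4 * real d ^ 2)) / 5))
    \<le> real n powr (- (\<gamma>\<^sup>2 * \<delta>\<^sup>2 / (24 * real d ^ 2)))"
proof -
  have "\<gamma>\<^sup>2 * \<delta>\<^sup>2 / (24 * real d ^ 2) * ln (real n) \<le> \<delta>\<^sup>2 * (\<gamma>\<^sup>2 * ln (real n)) / (20 * real d ^ 2)"
    using assms by (simp add: frac_le)
  also have "\<dots> \<le> \<delta>\<^sup>2 * (real n * r\<^sup>2) / (20 * real d ^ 2)"
    using sq_radius_lower_bound[OF assms(1,3,4)] by (intro divide_right_mono mult_left_mono) auto
  finally show ?thesis
    using assms by (simp add: powr_def)
qed

lemma box_grid_size_sq_le:
  fixes \<gamma> r :: real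
  assumes "0 < k" "0 < r" "real k * r \<le> 1" "2 \<le> n" "0 < \<gamma>"
    and "\<gamma> * sqrt (ln (real n) / real n) \<le> r"
  shows "real (ncells k r * k * d) ^ 2 \<le> 9 * real d ^ 2 * real n / (\<gamma>\<^sup>2 * ln 2)"
proof -
  have "real (ncells k r) * real k * r \<le> 3"
    using ncells_mult_bounds(2)[OF assms(1,2)] assms(3) by linarith
  then have "real (ncells k r * k * d) * r \<le> 3 * real d"
    using mult_right_mono[of "real (ncells k r) * real k * r" 3 "real d"] by (simp add: ac_simps)
  then have size_r: "real (ncells k r * k * d) ^ 2 * r\<^sup>2 \<le> 9 * real d ^ 2"
    using assms power_mono[of "real (ncells k r * k * d) * r" "3 * real d" 2]
    by (simp add: power_mult_distrib)
  have "\<gamma>\<^sup>2 * ln 2 \<le> real n * r\<^sup>2"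
  proof (rule order.trans)
    show "\<gamma>\<^sup>2 * ln 2 \<le> \<gamma>\<^sup>2 * ln (real n)"
      using assms by (intro mult_left_mono) auto
    show "\<gamma>\<^sup>2 * ln (real n) \<le> real n * r\<^sup>2"
      using assms by (intro sq_radius_lower_bound) auto
  qed
  then have "real (ncells k r * k * d) ^ 2 * (\<gamma>\<^sup>2 * ln 2) \<le> real (ncells k r * k * d) ^ 2 * (real n * r\<^sup>2)"
    by (rule mult_left_mono) simp
  also have "\<dots> = real n * (real (ncells k r * k * d) ^ 2 * r\<^sup>2)"
    by (simp only: ac_simps)
  also have "\<dots> \<le> real n * (9 * real d ^ 2)"
    using size_r by (rule mult_left_mono) simp
  finally show ?thesis
    using assms by (simp add: pos_le_divide_eq ac_simps)
qed

lemma prob_delta_good_UNIV_powr: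
  fixes k d n :: nat and r \<delta> \<gamma> :: real
  assumes "0 < k" "0 < d" "0 < r" "1 \<le> n" "0 \<le> \<delta>" "\<delta> \<le> 1" "0 \<le> \<gamma>"
    and "real k * r \<le> \<delta> / 20" "\<gamma> * sqrt (ln (real n) / real n) \<le> r"
  shows "1 - 2 * real (ncells k r * k * d) ^ 2 * real n powr (- (\<gamma>\<^sup>2 * \<delta>\<^sup>2 / (24 * real d ^ 2)))
    \<le> measure (sample_space n) {X \<in> space (sample_space n). delta_good k d \<delta> n r X UNIV}"
proof -
  have "2 * real (ncells k r * k * d) ^ 2 * exp (- (\<delta>\<^sup>2 * (real n * r\<^sup>2 / (4 * real d ^ 2)) / 5))
      \<le> 2 * real (ncells k r * k * d) ^ 2 * real n powr (- (\<gamma>\<^sup>2 * \<delta>\<^sup>2 / (24 * real d ^ 2)))"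
    using assms by (intro mult_left_mono exp_deviation_le_powr) auto
  moreover have "1 - 2 * real (ncells k r * k * d) ^ 2 * exp (- (\<delta>\<^sup>2 * (real n * r\<^sup>2 / (4 * real d ^ 2)) / 5))
      \<le> measure (sample_space n) {X \<in> space (sample_space n). delta_good k d \<delta> n r X UNIV}"
    using assms box_mean_bounds[OF assms(1-3,5,6,8)] by (intro prob_delta_good_UNIV) auto
  ultimately show ?thesis by linarith
qed

lemma eventually_prob_cell_good:
  fixes k d :: nat and \<delta> \<gamma> :: real and r :: "nat \<Rightarrow> real"
  assumes "0 < k" "0 < d" "0 < \<delta>" "\<delta> \<le> 1" "0 \<le> \<gamma>" "\<forall>n. 0 < r n" "r \<longlonglongrightarrow> 0"
    and "\<forall>\<^sub>F n in sequentially. \<gamma> * sqrt (ln (real n) / real n) \<le> r n"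
  shows "\<forall>\<^sub>F n in sequentially. \<forall>Q\<in>cells k (r n).
    1 - 2 * real (ncells k (r n) * k * d) ^ 2 * real n powr (- (\<gamma>\<^sup>2 * \<delta>\<^sup>2 / (24 * real d ^ 2)))
      \<le> measure (sample_space n) {X \<in> space (sample_space n). delta_good k d \<delta> n (r n) X Q}"
proof -
  have "\<forall>\<^sub>F n in sequentially. real k * r n < \<delta> / 20"
    using order_tendstoD(2)[OF tendsto_mult_right_zero[OF \<open>r \<longlonglongrightarrow> 0\<close>], of "\<delta> / 20" "real k"] assms
    by simp
  with assms(8) eventually_ge_at_top[of 1] show ?thesis
  proof eventually_elim
    case (elim n)
    interpret P: prob_space "sample_space n" by (rule prob_space_sample_space)
    have "P.prob {X \<in> space (sample_space n). delta_good k d \<delta> n (r n) X UNIV}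
        \<le> P.prob {X \<in> space (sample_space n). delta_good k d \<delta> n (r n) X Q}" for Q
      using delta_good_antimono by (intro P.finite_measure_mono sets_delta_good) blast+
    moreover have "1 - 2 * real (ncells k (r n) * k * d) ^ 2 * real n powr (- (\<gamma>\<^sup>2 * \<delta>\<^sup>2 / (24 * real d ^ 2)))
        \<le> P.prob {X \<in> space (sample_space n). delta_good k d \<delta> n (r n) X UNIV}"
      using elim assms by (intro prob_delta_good_UNIV_powr) auto
    ultimately show ?case by (blast intro: order.trans)
  qed
qed

lemma prob_cells_good_tendsto_1:
  fixes k d :: nat and \<delta> \<gamma> :: real and r :: "nat \<Rightarrow> real"
  assumes "0 < k" "0 < d" "0 < \<delta>" "\<delta> \<le> 1" "0 < \<gamma>" "24 * real d ^ 2 / \<delta>\<^sup>2 < \<gamma>\<^sup>2"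
    and "\<forall>n. 0 < r n" "r \<longlonglongrightarrow> 0"
    and "\<forall>\<^sub>F n in sequentially. \<gamma> * sqrt (ln (real n) / real n) \<le> r n"
  shows "(\<lambda>n. measure (sample_space n)
    {X \<in> space (sample_space n). \<forall>Q\<in>cells k (r n). delta_good k d \<delta> n (r n) X Q}) \<longlonglongrightarrow> 1"
proof -
  define c where "c = \<gamma>\<^sup>2 * \<delta>\<^sup>2 / (24 * real d ^ 2)"
  define C where "C = 18 * real d ^ 2 / (\<gamma>\<^sup>2 * ln 2)"
  have "1 < c"
    using assms unfolding c_def by (simp add: field_simps)
  have "\<forall>\<^sub>F n in sequentially. real k * r n < \<delta> / 20"
    using order_tendstoD(2)[OF tendsto_mult_right_zero[OF \<open>r \<longlonglongrightarrow> 0\<close>], of "\<delta> / 20" "real k"] assms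
    by simp
  with assms(9) eventually_ge_at_top[of 2]
  have "\<forall>\<^sub>F n in sequentially. 1 - C * real n powr (1 - c) \<le> measure (sample_space n)
    {X \<in> space (sample_space n). \<forall>Q\<in>cells k (r n). delta_good k d \<delta> n (r n) X Q}"
  proof eventually_elim
    case (elim n)
    interpret P: prob_space "sample_space n" by (rule prob_space_sample_space)
    have "2 * real (ncells k (r n) * k * d) ^ 2 * real n powr (- c)
        \<le> 2 * (9 * real d ^ 2 * real n / (\<gamma>\<^sup>2 * ln 2)) * real n powr (- c)"
      using elim assms by (intro mult_right_mono mult_left_mono box_grid_size_sq_le) auto
    also have "\<dots> = C * (real n powr 1 * real n powr (- c))"
      using elim by (simp add: C_def)
    also have "\<dots> = C * real n powr (1 - c)"
      unfolding powr_add[symmetric] by simp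
    finally have "1 - C * real n powr (1 - c)
        \<le> P.prob {X \<in> space (sample_space n). delta_good k d \<delta> n (r n) X UNIV}"
      using prob_delta_good_UNIV_powr[of k d "r n" n \<delta> \<gamma>] elim assms unfolding c_def by simp
    also have "\<dots> \<le> P.prob {X \<in> space (sample_space n). \<forall>Q\<in>cells k (r n). delta_good k d \<delta> n (r n) X Q}"
      using delta_good_antimono by (intro P.finite_measure_mono sets_delta_good_cells) blast
    finally show ?case .
  qed
  moreover have "\<forall>\<^sub>F n in sequentially. measure (sample_space n)
    {X \<in> space (sample_space n). \<forall>Q\<in>cells k (r n). delta_good k d \<delta> n (r n) X Q} \<le> 1"
    by (intro always_eventually allI prob_space.prob_le_1 prob_space_sample_space)
  moreover have "(\<lambda>n. 1 - C * real n powr (1 - c)) \<longlonglongrightarrow> 1 - C * 0"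
  proof (intro tendsto_intros)
    show "(\<lambda>n. real n powr (1 - c)) \<longlonglongrightarrow> 0"
      using \<open>1 < c\<close> by (intro tendsto_neg_powr filterlim_real_sequentially) simp
  qed
  ultimately show ?thesis
    using tendsto_sandwich[OF _ _ _ tendsto_const] by simp
qed

text \<open>The bound of the first claim holds for every \<open>\<gamma> \<ge> 0\<close>, so the witness \<open>\<gamma> = 1\<close> is
  no loss of generality.\<close>

theorem lemma1:
  fixes k d :: nat
  assumes "odd k" and "odd d"
  shows "\<forall>\<delta>::real. 0 < \<delta> \<and> \<delta> < 1 \<longrightarrow>
    (\<exists>\<gamma>>0. \<forall>r::nat \<Rightarrow> real. (\<forall>n. r n > 0) \<longrightarrow> r \<longlonglongrightarrow> 0 \<longrightarrow>
        (\<forall>\<^sub>F n in sequentially. r n \<ge> \<gamma> * sqrt (ln (real n) / real n)) \<longrightarrow>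
        (\<forall>\<^sub>F n in sequentially. \<forall>Q\<in>cells k (r n).
            measure (sample_space n) {X \<in> space (sample_space n). delta_good k d \<delta> n (r n) X Q}
              \<ge> 1 - 2 * real (ncells k (r n) * k * d) ^ 2
                    * real n powr (- (\<gamma>\<^sup>2 * \<delta>\<^sup>2 / (24 * real d ^ 2)))))
    \<and> (\<forall>\<gamma>>0. \<gamma>\<^sup>2 > 24 * real d ^ 2 / \<delta>\<^sup>2 \<longrightarrow>
        (\<forall>r::nat \<Rightarrow> real. (\<forall>n. r n > 0) \<longrightarrow> r \<longlonglongrightarrow> 0 \<longrightarrow>
          (\<forall>\<^sub>F n in sequentially. r n \<ge> \<gamma> * sqrt (ln (real n) / real n)) \<longrightarrow>
          (\<lambda>n. measure (sample_space n)
                 {X \<in> space (sample_space n). \<forall>Q\<in>cells k (r n). delta_good k d \<delta> n (r n) X Q})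
            \<longlonglongrightarrow> 1))"
proof -
  have "0 < k" "0 < d"
    using assms by (simp_all add: odd_pos)
  then show ?thesis
    by (intro allI impI conjI exI[of _ "1::real"] eventually_prob_cell_good prob_cells_good_tendsto_1) auto
qed

end
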